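(* Let $T$ and $T'$ be two proper caterpillars with the same $U$-polynomial. Then for any $\beta\in\Phi(T)$ and $\beta'\in\Phi(T')$, $\mathcal{L}(\beta,\mathbf{x})=\mathcal{L}(\beta',\mathbf{x})$.
   Context: Let $\mathbf{x}=x_1,x_2,\ldots$ be commuting indeterminates and $\mathbf{x}_\lambda=x_{\lambda_1}\cdots x_{\lambda_l}$ for a partition $\lambda$. For a tree $T=(V,E)$, $U_T(\mathbf{x})=\sum_{A\subseteq E}\mathbf{x}_{\lambda(A)}$, where $\lambda(A)$ is the partition of $|V|$ formed by the component sizes of $(V,A)$. A composition is a finite nonempty sequence of positive integers; its type $\lambda(\alpha)$ is its parts sorted decreasingly; $\alpha\succeq\beta$ ($\alpha$ is a coarsening of $\beta$) if $\alpha$ arises from $\beta$ by summing blocks of consecutive parts; $\mathcal{L}(\beta,\mathbf{x})=\sum_{\alpha\succeq\beta}\mathbf{x}_{\lambda(\alpha)}$. A caterpillar is a tree whose internal vertices induce a non-trivial path (the spine); it is proper if every internal vertex is adjacent to a leaf. For a proper caterpillar with spine $v_1\cdots v_k$, $\beta_i$ is $1$ plus the number of leaves adjacent to $v_i$, and $\Phi(T)=\{\beta_1\cdots\beta_k,\ \beta_k\cdots\beta_1\}$. *)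

theory Defs
  imports Main "HOL-Library.Multiset"
begin

text \<open>Monomials in commuting indeterminates x_1, x_2, ... are represented as multisets of
  indices (x_lambda for a partition lambda is the multiset of its parts), and polynomials
  with natural-number coefficients as multisets of monomials (a sum of monomials).\<close>

definition adj :: "'a set set \<Rightarrow> ('a \<times> 'a) set" where
  "adj A = {(u, w). {u, w} \<in> A}"

definition component :: "'a set \<Rightarrow> 'a set set \<Rightarrow> 'a \<Rightarrow> 'a set" where
  "component V A v = {w \<in> V. (v, w) \<in> (adj A)\<^sup>*}"

definition components :: "'a set \<Rightarrow> 'a set set \<Rightarrow> 'a set set" where
  "components V A = component V A ` V"

definition comp_partition :: "'a set \<Rightarrow> 'a set set \<Rightarrow> nat multiset" where
  "comp_partition V A = image_mset card (mset_set (components V A))"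

definition is_graph :: "'a set \<Rightarrow> 'a set set \<Rightarrow> bool" where
  "is_graph V E \<longleftrightarrow> finite V \<and> (\<forall>e\<in>E. e \<subseteq> V \<and> card e = 2)"

definition connected_graph :: "'a set \<Rightarrow> 'a set set \<Rightarrow> bool" where
  "connected_graph V E \<longleftrightarrow> V \<noteq> {} \<and> (\<forall>u\<in>V. \<forall>w\<in>V. (u, w) \<in> (adj E)\<^sup>*)"

definition is_tree :: "'a set \<Rightarrow> 'a set set \<Rightarrow> bool" where
  "is_tree V E \<longleftrightarrow> is_graph V E \<and> connected_graph V E \<and>
     (\<forall>e\<in>E. \<not> connected_graph V (E - {e}))"

definition U_poly :: "'a set \<Rightarrow> 'a set set \<Rightarrow> nat multiset multiset" where
  "U_poly V E = image_mset (comp_partition V) (mset_set (Pow E))"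

definition degree :: "'a set set \<Rightarrow> 'a \<Rightarrow> nat" where
  "degree E v = card {e \<in> E. v \<in> e}"

definition is_leaf :: "'a set \<Rightarrow> 'a set set \<Rightarrow> 'a \<Rightarrow> bool" where
  "is_leaf V E v \<longleftrightarrow> v \<in> V \<and> degree E v = 1"

definition is_internal :: "'a set \<Rightarrow> 'a set set \<Rightarrow> 'a \<Rightarrow> bool" where
  "is_internal V E v \<longleftrightarrow> v \<in> V \<and> degree E v \<ge> 2"

definition is_spine :: "'a set \<Rightarrow> 'a set set \<Rightarrow> 'a list \<Rightarrow> bool" where
  "is_spine V E vs \<longleftrightarrow> distinct vs \<and> length vs \<ge> 2 \<and>
     set vs = {v. is_internal V E v} \<and>
     (\<forall>i<length vs. \<forall>j<length vs. {vs ! i, vs ! j} \<in> E \<longleftrightarrow> (i + 1 = j \<or> j + 1 = i))"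

definition is_caterpillar :: "'a set \<Rightarrow> 'a set set \<Rightarrow> bool" where
  "is_caterpillar V E \<longleftrightarrow> is_tree V E \<and> (\<exists>vs. is_spine V E vs)"

definition is_proper_caterpillar :: "'a set \<Rightarrow> 'a set set \<Rightarrow> bool" where
  "is_proper_caterpillar V E \<longleftrightarrow> is_caterpillar V E \<and>
     (\<forall>v. is_internal V E v \<longrightarrow> (\<exists>u. is_leaf V E u \<and> {u, v} \<in> E))"

definition spine_comp :: "'a set \<Rightarrow> 'a set set \<Rightarrow> 'a list \<Rightarrow> nat list" where
  "spine_comp V E vs = map (\<lambda>v. 1 + card {u. is_leaf V E u \<and> {u, v} \<in> E}) vs"

definition Phi :: "'a set \<Rightarrow> 'a set set \<Rightarrow> nat list set" where
  "Phi V E = {spine_comp V E vs | vs. is_spine V E vs} \<union>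
             {rev (spine_comp V E vs) | vs. is_spine V E vs}"

definition is_composition :: "nat list \<Rightarrow> bool" where
  "is_composition \<alpha> \<longleftrightarrow> \<alpha> \<noteq> [] \<and> (\<forall>a\<in>set \<alpha>. a > 0)"

definition coarsening :: "nat list \<Rightarrow> nat list \<Rightarrow> bool" where
  "coarsening \<alpha> \<beta> \<longleftrightarrow> (\<exists>bs. concat bs = \<beta> \<and> (\<forall>b\<in>set bs. b \<noteq> []) \<and> \<alpha> = map sum_list bs)"

definition L_poly :: "nat list \<Rightarrow> nat multiset multiset" where
  "L_poly \<beta> = image_mset mset (mset_set {\<alpha>. is_composition \<alpha> \<and> coarsening \<alpha> \<beta>})"

end

theory Submission
  imports Defs
begin

text \<open>In a proper caterpillar every spine vertex carries a leaf, so a set A of edges leaves no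
  isolated vertex exactly when it contains all leaf edges. Such sets are determined by the set K of
  spine edges they contain, and the component sizes of A are then the parts of the coarsening of
  \<beta> that merges \<beta>_i and \<beta>_(i+1) for i \<in> K; all these parts are at least 2, as every \<beta>_i is.
  Hence L(\<beta>) is the part of U_T free of the variable x_1, for either orientation of the spine,
  and so it is determined by U_T.\<close>

text \<open>A coarsening of a composition bs is encoded by the set K of positions i at which the
  parts i and i+1 are merged; block_of K i is the index of the block containing part i.\<close>

definition block_of :: "nat set \<Rightarrow> nat \<Rightarrow> nat" where
  "block_of K i = card ({..<i} - K)"

definition block_sum :: "nat list \<Rightarrow> nat set \<Rightarrow> nat \<Rightarrow> nat" where
  "block_sum bs K c = (\<Sum>i<length bs. if block_of K i = c then bs ! i else 0)"

definition glue :: "nat list \<Rightarrow> nat set \<Rightarrow> nat list" where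
  "glue bs K = map (block_sum bs K) [0..<Suc (block_of K (length bs - 1))]"

fun add_hd :: "nat \<Rightarrow> nat list \<Rightarrow> nat list" where
  "add_hd b [] = []"
| "add_hd b (a # as) = (b + a) # as"

definition coarsenings :: "nat list \<Rightarrow> nat list set" where
  "coarsenings bs = {a. is_composition a \<and> coarsening a bs}"

lemma block_of_0 [simp]: "block_of K 0 = 0"
  by (simp add: block_of_def)

lemma block_of_Suc: "block_of K (Suc i) = block_of K i + (if i \<in> K then 0 else 1)"
proof (cases "i \<in> K")
  case True
  then have "{..<Suc i} - K = {..<i} - K" by (auto simp: less_Suc_eq)
  then show ?thesis using True by (simp add: block_of_def)
next
  case False
  then have "{..<Suc i} - K = insert i ({..<i} - K)" by auto
  then show ?thesis using False by (simp add: block_of_def)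
qed

lemma block_of_Suc_image: "block_of (Suc ` K) (Suc i) = Suc (block_of K i)"
  by (induction i) (auto simp: block_of_Suc)

lemma block_of_insert_0_Suc_image: "block_of (insert 0 (Suc ` K)) (Suc i) = block_of K i"
  by (induction i) (auto simp: block_of_Suc)

lemma block_of_mono: "i \<le> j \<Longrightarrow> block_of K i \<le> block_of K j"
  unfolding block_of_def by (rule card_mono) auto

lemma block_of_eq_imp_mem:
  assumes "i \<le> t" "t < j" "block_of K i = block_of K j"
  shows "t \<in> K"
proof (rule ccontr)
  assume "t \<notin> K"
  then have "block_of K (Suc t) = Suc (block_of K t)" by (simp add: block_of_Suc)
  moreover have "block_of K i \<le> block_of K t" using assms(1) by (rule block_of_mono)
  moreover have "block_of K (Suc t) \<le> block_of K j" using assms(2) by (intro block_of_mono) simp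
  ultimately show False using assms by linarith
qed

lemma block_of_image: "block_of K ` {..<Suc n} = {0..<Suc (block_of K n)}"
proof (induction n)
  case (Suc n)
  have "block_of K ` {..<Suc (Suc n)} = insert (block_of K (Suc n)) (block_of K ` {..<Suc n})"
    by (simp add: lessThan_Suc)
  then show ?case using Suc by (auto simp: block_of_Suc)
qed auto

lemma block_sum_Cons:
  "block_sum (b # bs) K c = (if c = 0 then b else 0)
     + (\<Sum>i<length bs. if block_of K (Suc i) = c then bs ! i else 0)"
  unfolding block_sum_def by (simp only: length_Cons sum.lessThan_Suc_shift nth_Cons_Suc nth_Cons_0
    block_of_0 eq_commute[of 0 c])

lemma glue_Cons_Suc_image: "glue (b # c # bs) (Suc ` K) = b # glue (c # bs) K"
proof -
  have block_sum_0: "block_sum (b # c # bs) (Suc ` K) 0 = b"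
    by (simp add: block_sum_Cons block_of_Suc_image)
  have block_sum_Suc: "block_sum (b # c # bs) (Suc ` K) (Suc x) = block_sum (c # bs) K x" for x
    unfolding block_sum_Cons[of b "c # bs"] block_of_Suc_image by (simp add: block_sum_def)
  have "glue (b # c # bs) (Suc ` K)
      = map (block_sum (b # c # bs) (Suc ` K)) (0 # map Suc [0..<Suc (block_of K (length bs))])"
    by (simp add: glue_def block_of_Suc_image upt_conv_Cons map_Suc_upt del: upt_Suc)
  then show ?thesis by (simp add: glue_def block_sum_0 block_sum_Suc comp_def del: upt_Suc)
qed

lemma glue_Cons_insert_0: "glue (b # c # bs) (insert 0 (Suc ` K)) = add_hd b (glue (c # bs) K)"
proof -
  have block_sum_eq: "block_sum (b # c # bs) (insert 0 (Suc ` K)) x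
      = (if x = 0 then b else 0) + block_sum (c # bs) K x" for x
    unfolding block_sum_Cons[of b "c # bs"] block_of_insert_0_Suc_image by (simp only: block_sum_def)
  define m where "m = block_of K (length bs)"
  have "[0..<Suc m] = 0 # [Suc 0..<Suc m]" by (simp add: upt_conv_Cons del: upt_Suc)
  moreover have "glue (b # c # bs) (insert 0 (Suc ` K))
      = map (block_sum (b # c # bs) (insert 0 (Suc ` K))) [0..<Suc m]"
    by (simp add: glue_def block_of_insert_0_Suc_image m_def del: upt_Suc)
  ultimately show ?thesis by (simp add: glue_def m_def block_sum_eq del: upt_Suc)
qed

lemma mset_glue:
  assumes "bs \<noteq> []"
  shows "mset (glue bs K) = image_mset (block_sum bs K) (mset_set (block_of K ` {..<length bs}))"
proof -
  have "{..<length bs} = {..<Suc (length bs - 1)}" using assms by simp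
  then show ?thesis unfolding glue_def by (simp only: block_of_image mset_map mset_upt)
qed

lemma coarsening_imp_composition:
  assumes "coarsening a bs" "is_composition bs"
  shows "is_composition a"
proof -
  obtain xs where xs: "concat xs = bs" "\<forall>x\<in>set xs. x \<noteq> []" "a = map sum_list xs"
    using assms(1) unfolding coarsening_def by blast
  have "0 < sum_list x" if "x \<in> set xs" for x
  proof -
    have "hd x \<in> set x" using that xs(2) by simp
    then have "0 < hd x" "hd x \<le> sum_list x"
      using that xs(1) assms(2) by (auto simp: is_composition_def member_le_sum_list)
    then show ?thesis by simp
  qed
  then show ?thesis using xs assms(2) by (auto simp: is_composition_def)
qed

lemma coarsening_singleton_iff: "coarsening a [b] \<longleftrightarrow> a = [b]"
proof
  assume "coarsening a [b]"
  then obtain xs where xs: "concat xs = [b]" "\<forall>x\<in>set xs. x \<noteq> []" "a = map sum_list xs"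
    unfolding coarsening_def by blast
  then have "xs = [[b]]"
    by (cases xs) (auto simp: append_eq_Cons_conv)
  then show "a = [b]" using xs by simp
qed (auto simp: coarsening_def intro: exI[of _ "[[b]]"])

lemma coarsening_Cons_Cons_iff:
  "coarsening a (b # c # bs) \<longleftrightarrow>
     (\<exists>a'. coarsening a' (c # bs) \<and> (a = b # a' \<or> a = add_hd b a'))"
proof
  assume "coarsening a (b # c # bs)"
  then obtain xs where xs: "concat xs = b # c # bs" "\<forall>x\<in>set xs. x \<noteq> []" "a = map sum_list xs"
    unfolding coarsening_def by blast
  then obtain x ys where "xs = x # ys" "x \<noteq> []" by (cases xs) auto
  with xs obtain r where xs_eq: "xs = (b # r) # ys" by (cases x) auto
  show "\<exists>a'. coarsening a' (c # bs) \<and> (a = b # a' \<or> a = add_hd b a')"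
  proof (cases "r = []")
    case True
    then have "coarsening (map sum_list ys) (c # bs)"
      using xs xs_eq unfolding coarsening_def by auto
    then show ?thesis using xs xs_eq True by auto
  next
    case False
    then have "coarsening (map sum_list (r # ys)) (c # bs)"
      using xs xs_eq unfolding coarsening_def by (intro exI[of _ "r # ys"]) auto
    then show ?thesis using xs xs_eq by auto
  qed
next
  assume "\<exists>a'. coarsening a' (c # bs) \<and> (a = b # a' \<or> a = add_hd b a')"
  then obtain xs where xs: "concat xs = c # bs" "\<forall>x\<in>set xs. x \<noteq> []"
    and a: "a = b # map sum_list xs \<or> a = add_hd b (map sum_list xs)"
    unfolding coarsening_def by blast
  then obtain r ys where xs_eq: "xs = r # ys" by (cases xs) auto
  from a show "coarsening a (b # c # bs)"
  proof
    assume "a = b # map sum_list xs"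
    then show ?thesis using xs unfolding coarsening_def by (intro exI[of _ "[b] # xs"]) auto
  next
    assume "a = add_hd b (map sum_list xs)"
    then show ?thesis using xs xs_eq unfolding coarsening_def by (intro exI[of _ "(b # r) # ys"]) auto
  qed
qed

lemma coarsenings_singleton: "0 < b \<Longrightarrow> coarsenings [b] = {[b]}"
  by (auto simp: coarsenings_def coarsening_singleton_iff is_composition_def)

lemma coarsenings_Cons_Cons:
  assumes "0 < b" "is_composition (c # bs)"
  shows "coarsenings (b # c # bs) = Cons b ` coarsenings (c # bs) \<union> add_hd b ` coarsenings (c # bs)"
proof -
  have "is_composition (b # c # bs)" using assms unfolding is_composition_def by auto
  then have "a \<in> coarsenings (b # c # bs) \<longleftrightarrow> coarsening a (b # c # bs)" for a
    unfolding coarsenings_def using coarsening_imp_composition by blast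
  moreover have "a \<in> coarsenings (c # bs) \<longleftrightarrow> coarsening a (c # bs)" for a
    unfolding coarsenings_def using coarsening_imp_composition[OF _ assms(2)] by blast
  ultimately show ?thesis unfolding coarsening_Cons_Cons_iff by blast
qed

lemma finite_coarsenings: "is_composition bs \<Longrightarrow> finite (coarsenings bs)"
proof (induction bs rule: induct_list012)
  case (3 b c bs)
  then have "0 < b" "is_composition (c # bs)" by (auto simp: is_composition_def)
  with 3 show ?case by (simp add: coarsenings_Cons_Cons)
qed (auto simp: is_composition_def coarsenings_singleton)

lemma mset_set_coarsenings_Cons_Cons:
  assumes "0 < b" "is_composition (c # bs)"
  shows "mset_set (coarsenings (b # c # bs))
    = image_mset (Cons b) (mset_set (coarsenings (c # bs)))
      + image_mset (add_hd b) (mset_set (coarsenings (c # bs)))"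
proof -
  let ?C = "coarsenings (c # bs)"
  have nonempty: "x \<noteq> []" and hd_pos: "0 < hd x" if "x \<in> ?C" for x
    using that unfolding coarsenings_def is_composition_def by (cases x; auto)+
  have "inj_on (add_hd b) ?C"
  proof (rule inj_onI)
    fix x y assume "x \<in> ?C" "y \<in> ?C" "add_hd b x = add_hd b y"
    then show "x = y" using nonempty by (cases x; cases y) auto
  qed
  moreover have "Cons b ` ?C \<inter> add_hd b ` ?C = {}"
  proof -
    have "b # x \<noteq> add_hd b y" if "y \<in> ?C" for x y
      using nonempty[OF that] hd_pos[OF that] by (cases y) auto
    then show ?thesis by blast
  qed
  ultimately show ?thesis
    using finite_coarsenings[OF assms(2)]
    by (simp add: coarsenings_Cons_Cons[OF assms] mset_set_Union image_mset_mset_set)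
qed

lemma Pow_lessThan_Suc:
  "Pow {..<Suc n} = image Suc ` Pow {..<n} \<union> (\<lambda>K. insert 0 (Suc ` K)) ` Pow {..<n}"
proof (intro equalityI subsetI)
  fix K assume K: "K \<in> Pow {..<Suc n}"
  define K' where "K' = {i. Suc i \<in> K}"
  have "K' \<in> Pow {..<n}" using K unfolding K'_def by auto
  moreover have "K - {0} = Suc ` K'"
    unfolding K'_def by (auto simp: image_iff) (metis not0_implies_Suc)
  then have "K = Suc ` K' \<or> K = insert 0 (Suc ` K')" by auto
  ultimately show "K \<in> image Suc ` Pow {..<n} \<union> (\<lambda>K. insert 0 (Suc ` K)) ` Pow {..<n}"
    by blast
qed auto

lemma mset_set_Pow_lessThan_Suc:
  "mset_set (Pow {..<Suc n}) = image_mset (image Suc) (mset_set (Pow {..<n}))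
     + image_mset (\<lambda>K. insert 0 (Suc ` K)) (mset_set (Pow {..<n}))"
proof -
  have "inj_on (image Suc) (Pow {..<n})" by (simp add: inj_image_eq_iff inj_on_def)
  moreover have "inj_on (\<lambda>K. insert 0 (Suc ` K)) (Pow {..<n})"
  proof (rule inj_onI)
    fix X Y assume "insert 0 (Suc ` X) = insert (0::nat) (Suc ` Y)"
    then have "Suc ` X = Suc ` Y" by (metis Zero_not_Suc image_iff insert_ident)
    then show "X = Y" by (simp add: inj_image_eq_iff)
  qed
  moreover have "image Suc ` Pow {..<n} \<inter> (\<lambda>K. insert 0 (Suc ` K)) ` Pow {..<n} = {}" by auto
  ultimately show ?thesis
    unfolding Pow_lessThan_Suc by (subst mset_set_Union) (auto simp: image_mset_mset_set)
qed

lemma mset_set_coarsenings: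
  "is_composition bs \<Longrightarrow>
    mset_set (coarsenings bs) = image_mset (glue bs) (mset_set (Pow {..<length bs - 1}))"
proof (induction bs rule: induct_list012)
  case (2 b)
  then show ?case by (simp add: coarsenings_singleton is_composition_def glue_def block_sum_def)
next
  case (3 b c bs)
  then have "0 < b" "is_composition (c # bs)" by (auto simp: is_composition_def)
  with 3 show ?case
    by (simp add: mset_set_coarsenings_Cons_Cons mset_set_Pow_lessThan_Suc multiset.map_comp comp_def
        glue_Cons_Suc_image glue_Cons_insert_0)
qed (simp add: is_composition_def)

lemma L_poly_eq_glue:
  "is_composition bs \<Longrightarrow>
    L_poly bs = image_mset (\<lambda>K. mset (glue bs K)) (mset_set (Pow {..<length bs - 1}))"
  unfolding L_poly_def coarsenings_def[symmetric]
  by (simp add: mset_set_coarsenings multiset.map_comp comp_def)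

lemma coarsening_rev: "coarsening a bs \<Longrightarrow> coarsening (rev a) (rev bs)"
  unfolding coarsening_def
  by (elim exE conjE, rule exI[of _ "rev (map rev _)"]) (auto simp: rev_concat rev_map)

lemma coarsenings_rev: "coarsenings (rev bs) = rev ` coarsenings bs"
proof -
  have sub: "rev ` coarsenings xs \<subseteq> coarsenings (rev xs)" for xs
    using coarsening_rev unfolding coarsenings_def is_composition_def by auto
  have "coarsenings (rev bs) \<subseteq> rev ` coarsenings bs"
    using image_mono[OF sub[of "rev bs"], of rev] by (simp add: image_comp)
  then show ?thesis using sub by blast
qed

lemma L_poly_rev: "L_poly (rev bs) = L_poly bs"
  unfolding L_poly_def coarsenings_def[symmetric] coarsenings_rev
  by (subst image_mset_mset_set[symmetric]) (auto simp: inj_on_def multiset.map_comp comp_def)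

lemma adj_rtrancl_sym: "(x, y) \<in> (adj A)\<^sup>* \<Longrightarrow> (y, x) \<in> (adj A)\<^sup>*"
proof -
  have "sym (adj A)" unfolding sym_def adj_def by (auto simp: insert_commute)
  then have "sym ((adj A)\<^sup>*)" by (rule sym_rtrancl)
  then show "(x, y) \<in> (adj A)\<^sup>* \<Longrightarrow> (y, x) \<in> (adj A)\<^sup>*" by (rule symD)
qed

lemma comp_partition_by_label:
  assumes "\<And>u w. u \<in> V \<Longrightarrow> w \<in> V \<Longrightarrow> (u, w) \<in> (adj A)\<^sup>* \<longleftrightarrow> F u = F w"
  shows "comp_partition V A = image_mset (\<lambda>c. card {v\<in>V. F v = c}) (mset_set (F ` V))"
proof -
  define block where "block c = {v\<in>V. F v = c}" for c
  have "component V A v = block (F v)" if "v \<in> V" for v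
    unfolding component_def block_def using assms that by auto
  then have "components V A = block ` F ` V"
    unfolding components_def by (auto simp: image_iff)
  moreover have "inj_on block (F ` V)"
    by (rule inj_onI) (auto simp: block_def)
  ultimately have "mset_set (components V A) = image_mset block (mset_set (F ` V))"
    by (simp add: image_mset_mset_set)
  then show ?thesis unfolding comp_partition_def by (simp add: multiset.map_comp comp_def block_def)
qed

locale proper_caterpillar_spine =
  fixes V :: "'a set" and E :: "'a set set" and vs :: "'a list"
  assumes proper_caterpillar: "is_proper_caterpillar V E" and spine: "is_spine V E vs"
begin

lemma tree: "is_tree V E"
  using proper_caterpillar unfolding is_proper_caterpillar_def is_caterpillar_def by blast

lemma graph: "is_graph V E"
  using tree unfolding is_tree_def by blast

lemma finite_V: "finite V"
  using graph unfolding is_graph_def by blast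

lemma edge_subset: "e \<in> E \<Longrightarrow> e \<subseteq> V"
  using graph unfolding is_graph_def by blast

lemma card_edge: "e \<in> E \<Longrightarrow> card e = 2"
  using graph unfolding is_graph_def by blast

lemma finite_E: "finite E"
proof -
  have "E \<subseteq> Pow V" using edge_subset by blast
  then show ?thesis using finite_V finite_subset by blast
qed

lemma connected: "u \<in> V \<Longrightarrow> w \<in> V \<Longrightarrow> (u, w) \<in> (adj E)\<^sup>*"
  using tree unfolding is_tree_def connected_graph_def by blast

lemma distinct_spine: "distinct vs"
  using spine unfolding is_spine_def by blast

lemma length_spine: "2 \<le> length vs"
  using spine unfolding is_spine_def by blast

lemma set_spine: "set vs = {v. is_internal V E v}"
  using spine unfolding is_spine_def by blast

lemma spine_adj_iff:
  "i < length vs \<Longrightarrow> j < length vs \<Longrightarrow> {vs ! i, vs ! j} \<in> E \<longleftrightarrow> i + 1 = j \<or> j + 1 = i"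
  using spine unfolding is_spine_def by blast

lemma internal_has_leaf: "is_internal V E v \<Longrightarrow> \<exists>u. is_leaf V E u \<and> {u, v} \<in> E"
  using proper_caterpillar unfolding is_proper_caterpillar_def by blast

lemma spine_nth_eq_iff: "i < length vs \<Longrightarrow> j < length vs \<Longrightarrow> vs ! i = vs ! j \<longleftrightarrow> i = j"
  using distinct_spine by (simp add: nth_eq_iff_index_eq)

lemma spine_subset: "v \<in> set vs \<Longrightarrow> v \<in> V"
  using set_spine unfolding is_internal_def by auto

lemma leaf_notin_spine: "is_leaf V E u \<Longrightarrow> u \<notin> set vs"
  using set_spine unfolding is_internal_def is_leaf_def by auto

lemma edge_doubleton: "e \<in> E \<Longrightarrow> \<exists>x y. e = {x, y}"
  using card_edge card_2_iff by metis

lemma vertex_has_edge: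
  assumes "v \<in> V"
  shows "\<exists>e\<in>E. v \<in> e"
proof -
  have first: "vs ! 0 \<in> set vs" using length_spine by (intro nth_mem) linarith
  show ?thesis
  proof (cases "v = vs ! 0")
    case True
    then have "card {e \<in> E. v \<in> e} \<ge> 2"
      using first set_spine unfolding is_internal_def degree_def by auto
    then have "{e \<in> E. v \<in> e} \<noteq> {}" by (metis card.empty not_numeral_le_zero)
    then show ?thesis by blast
  next
    case False
    have "(v, vs ! 0) \<in> (adj E)\<^sup>*" using connected assms spine_subset first by blast
    then show ?thesis
    proof (cases rule: converse_rtranclE)
      case base
      then show ?thesis using False by simp
    next
      case (step y)
      then show ?thesis unfolding adj_def by auto
    qed
  qed
qed

lemma internal_or_leaf: "v \<in> V \<Longrightarrow> is_internal V E v \<or> is_leaf V E v"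
proof -
  assume v: "v \<in> V"
  have "{e \<in> E. v \<in> e} \<noteq> {}" using vertex_has_edge[OF v] by blast
  then have "degree E v \<ge> 1" unfolding degree_def using finite_E by (simp add: Suc_leI card_gt_0_iff)
  then show ?thesis using v unfolding is_internal_def is_leaf_def by auto
qed

lemma leaf_edge_unique:
  assumes "is_leaf V E u" "e \<in> E" "u \<in> e" "e' \<in> E" "u \<in> e'"
  shows "e = e'"
proof -
  have "card {e \<in> E. u \<in> e} = 1" using assms(1) unfolding is_leaf_def degree_def by simp
  then obtain e0 where single: "{e \<in> E. u \<in> e} = {e0}" by (rule card_1_singletonE)
  have "e \<in> {e \<in> E. u \<in> e}" "e' \<in> {e \<in> E. u \<in> e}" using assms by simp_all
  then show ?thesis unfolding single by simp
qed

definition leaf_parent :: "'a \<Rightarrow> 'a" where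
  "leaf_parent u = (THE p. {u, p} \<in> E)"

lemma leaf_parent:
  assumes "is_leaf V E u"
  shows "{u, leaf_parent u} \<in> E" and "\<And>p. {u, p} \<in> E \<Longrightarrow> p = leaf_parent u"
proof -
  obtain e where e: "e \<in> E" "u \<in> e"
    using assms vertex_has_edge unfolding is_leaf_def by blast
  obtain x y where xy: "e = {x, y}" using edge_doubleton[OF e(1)] by blast
  obtain p where p: "{u, p} \<in> E"
  proof (cases "u = x")
    case True
    then show ?thesis using that e xy by blast
  next
    case False
    then have "e = {u, x}" using e xy by auto
    then show ?thesis using that e by blast
  qed
  have unique: "q = p" if "{u, q} \<in> E" for q
  proof -
    have "{u, q} = {u, p}" using leaf_edge_unique[OF assms that _ p] by simp
    moreover have "u \<noteq> q" using card_edge[OF that] by (cases "u = q") auto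
    ultimately show ?thesis by (metis doubleton_eq_iff)
  qed
  have "leaf_parent u = p" unfolding leaf_parent_def by (rule the_equality) (use p unique in blast)+
  with p unique show "{u, leaf_parent u} \<in> E" "\<And>q. {u, q} \<in> E \<Longrightarrow> q = leaf_parent u" by blast+
qed

lemma leaf_parent_in_spine:
  assumes u: "is_leaf V E u"
  shows "leaf_parent u \<in> set vs"
proof (rule ccontr)
  define p where "p = leaf_parent u"
  assume "leaf_parent u \<notin> set vs"
  have e: "{u, p} \<in> E" using leaf_parent(1)[OF u] p_def by simp
  have "p \<in> V" using edge_subset[OF e] by auto
  then have p: "is_leaf V E p"
    using internal_or_leaf \<open>leaf_parent u \<notin> set vs\<close> set_spine p_def by auto
  \<comment> \<open>two adjacent leaves form a whole component, which cannot reach the spine\<close>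
  have closed: "y \<in> {u, p}" if "x \<in> {u, p}" "(x, y) \<in> adj E" for x y
  proof -
    have xy: "{x, y} \<in> E" using that unfolding adj_def by simp
    have "is_leaf V E x" using that u p by auto
    then have "{x, y} = {u, p}" using leaf_edge_unique[OF _ xy _ e] that by auto
    then show ?thesis by auto
  qed
  have first: "vs ! 0 \<in> set vs" using length_spine by (intro nth_mem) linarith
  have "u \<in> V" using u unfolding is_leaf_def by auto
  then have "(u, vs ! 0) \<in> (adj E)\<^sup>*" using connected spine_subset first by blast
  then have "vs ! 0 \<in> {u, p}"
    by (induction rule: rtrancl_induct) (use closed in auto)
  then show False using first u p leaf_notin_spine by auto
qed

definition spine_proj :: "'a \<Rightarrow> 'a" where
  "spine_proj v = (if v \<in> set vs then v else leaf_parent v)"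

definition spine_index :: "'a \<Rightarrow> nat" where
  "spine_index v = (THE i. i < length vs \<and> vs ! i = spine_proj v)"

definition leaves_at :: "'a \<Rightarrow> 'a set" where
  "leaves_at v = {u. is_leaf V E u \<and> {u, v} \<in> E}"

lemma spine_proj_in_spine: "v \<in> V \<Longrightarrow> spine_proj v \<in> set vs"
  using internal_or_leaf[of v] leaf_parent_in_spine[of v] set_spine unfolding spine_proj_def by auto

lemma spine_proj_leaf: "is_leaf V E u \<Longrightarrow> spine_proj u = leaf_parent u"
  using leaf_notin_spine unfolding spine_proj_def by auto

lemma spine_index_nth: "i < length vs \<Longrightarrow> spine_index (vs ! i) = i"
  unfolding spine_index_def spine_proj_def by (rule the_equality) (auto simp: spine_nth_eq_iff)

lemma spine_index:
  assumes "v \<in> V"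
  shows "spine_index v < length vs" and "vs ! spine_index v = spine_proj v"
proof -
  obtain i where i: "i < length vs" "vs ! i = spine_proj v"
    using spine_proj_in_spine[OF assms] by (auto simp: in_set_conv_nth)
  have "spine_index v = i"
    unfolding spine_index_def
    by (rule the_equality) (use i in simp, metis i spine_nth_eq_iff)
  then show "spine_index v < length vs" "vs ! spine_index v = spine_proj v" using i by auto
qed

lemma spine_index_image: "spine_index ` V = {..<length vs}"
proof (intro equalityI subsetI)
  fix i assume "i \<in> {..<length vs}"
  then have "i = spine_index (vs ! i)" "vs ! i \<in> V" using spine_index_nth spine_subset by auto
  then show "i \<in> spine_index ` V" by blast
qed (use spine_index in auto)

lemma spine_index_fibre:
  assumes i: "i < length vs"
  shows "{v\<in>V. spine_index v = i} = insert (vs ! i) (leaves_at (vs ! i))"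
proof (intro equalityI subsetI)
  fix v assume "v \<in> {v\<in>V. spine_index v = i}"
  then have v: "v \<in> V" "spine_index v = i" by auto
  show "v \<in> insert (vs ! i) (leaves_at (vs ! i))"
  proof (cases "v \<in> set vs")
    case True
    then show ?thesis using spine_index[OF v(1)] v unfolding spine_proj_def by auto
  next
    case False
    then have leaf: "is_leaf V E v" using internal_or_leaf[OF v(1)] set_spine by auto
    then have "vs ! i = leaf_parent v" using spine_index[OF v(1)] v spine_proj_leaf by auto
    then show ?thesis using leaf_parent(1)[OF leaf] leaf unfolding leaves_at_def by auto
  qed
next
  fix v assume "v \<in> insert (vs ! i) (leaves_at (vs ! i))"
  then consider "v = vs ! i" | "is_leaf V E v" "{v, vs ! i} \<in> E" unfolding leaves_at_def by auto
  then show "v \<in> {v\<in>V. spine_index v = i}"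
  proof cases
    case 1
    then show ?thesis using spine_index_nth[OF i] spine_subset i by auto
  next
    case 2
    then have "spine_proj v = vs ! i" using leaf_parent(2) spine_proj_leaf by metis
    moreover have "v \<in> V" using 2 unfolding is_leaf_def by simp
    ultimately show ?thesis using spine_index spine_nth_eq_iff i by fastforce
  qed
qed

abbreviation parts :: "nat list" where
  "parts \<equiv> spine_comp V E vs"

lemma length_parts: "length parts = length vs"
  unfolding spine_comp_def by simp

lemma composition_parts: "is_composition parts"
  unfolding is_composition_def spine_comp_def using length_spine by auto

lemma finite_leaves_at: "finite (leaves_at v)"
  using finite_V by (rule rev_finite_subset) (auto simp: leaves_at_def is_leaf_def)

lemma nth_parts: "i < length vs \<Longrightarrow> parts ! i = 1 + card (leaves_at (vs ! i))"
  unfolding spine_comp_def leaves_at_def by simp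

lemma card_spine_index_fibre:
  assumes i: "i < length vs"
  shows "card {v\<in>V. spine_index v = i} = parts ! i"
proof -
  have "vs ! i \<notin> leaves_at (vs ! i)"
    using leaf_notin_spine nth_mem[OF i] unfolding leaves_at_def by blast
  then show ?thesis using spine_index_fibre[OF i] nth_parts[OF i] finite_leaves_at by simp
qed

lemma nth_parts_ge_2: "i < length vs \<Longrightarrow> 2 \<le> parts ! i"
proof -
  assume i: "i < length vs"
  then have "is_internal V E (vs ! i)" using set_spine nth_mem by blast
  then have "leaves_at (vs ! i) \<noteq> {}" using internal_has_leaf unfolding leaves_at_def by blast
  then show ?thesis using nth_parts[OF i] finite_leaves_at by (simp add: Suc_leI card_gt_0_iff)
qed

lemma card_block_of_spine_index: "card {v\<in>V. block_of K (spine_index v) = c} = block_sum parts K c"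
proof -
  define I where "I = {i\<in>{..<length vs}. block_of K i = c}"
  have "{v\<in>V. block_of K (spine_index v) = c} = (\<Union>i\<in>I. {v\<in>V. spine_index v = i})"
    unfolding I_def using spine_index by auto
  also have "card \<dots> = (\<Sum>i\<in>I. card {v\<in>V. spine_index v = i})"
    by (rule card_UN_disjoint) (auto simp: I_def finite_V)
  also have "\<dots> = (\<Sum>i\<in>I. parts ! i)"
    by (rule sum.cong) (auto simp: I_def card_spine_index_fibre)
  also have "\<dots> = block_sum parts K c"
    unfolding I_def block_sum_def length_parts by (rule sum.inter_filter) simp
  finally show ?thesis .
qed

definition spine_edge :: "nat \<Rightarrow> 'a set" where
  "spine_edge i = {vs ! i, vs ! Suc i}"

definition leaf_edges :: "'a set set" where
  "leaf_edges = {e \<in> E. \<exists>u\<in>e. is_leaf V E u}"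

definition glued_edges :: "nat set \<Rightarrow> 'a set set" where
  "glued_edges K = leaf_edges \<union> spine_edge ` K"

lemma leaf_edgesE:
  assumes "e \<in> leaf_edges"
  obtains u where "is_leaf V E u" "e = {u, leaf_parent u}"
proof -
  obtain u where u: "e \<in> E" "u \<in> e" "is_leaf V E u" using assms unfolding leaf_edges_def by blast
  then have "e = {u, leaf_parent u}" using leaf_edge_unique[OF u(3,1,2) leaf_parent(1)[OF u(3)]] by simp
  then show ?thesis using u that by blast
qed

lemma spine_edge_in_E: "i < length vs - 1 \<Longrightarrow> spine_edge i \<in> E"
  unfolding spine_edge_def using spine_adj_iff[of i "Suc i"] by simp

lemma spine_edge_notin_leaf_edges:
  assumes "i < length vs - 1"
  shows "spine_edge i \<notin> leaf_edges"
proof -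
  have "vs ! i \<in> set vs" "vs ! Suc i \<in> set vs" using assms by simp_all
  then show ?thesis unfolding spine_edge_def leaf_edges_def using leaf_notin_spine by auto
qed

lemma spine_edge_inj:
  assumes "i < length vs - 1" "j < length vs - 1" "spine_edge i = spine_edge j"
  shows "i = j"
proof -
  have "vs ! i \<in> {vs ! j, vs ! Suc j}" "vs ! Suc i \<in> {vs ! j, vs ! Suc j}"
    using assms(3) unfolding spine_edge_def by blast+
  then show "i = j" using assms(1,2) spine_nth_eq_iff by auto
qed

lemma glued_edges_subset: "K \<subseteq> {..<length vs - 1} \<Longrightarrow> glued_edges K \<subseteq> E"
  unfolding glued_edges_def leaf_edges_def using spine_edge_in_E by auto

lemma inj_on_glued_edges: "inj_on glued_edges (Pow {..<length vs - 1})"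
proof -
  have "K \<subseteq> K'"
    if K: "K \<subseteq> {..<length vs - 1}" "K' \<subseteq> {..<length vs - 1}" "glued_edges K = glued_edges K'"
    for K K'
  proof
    fix i assume "i \<in> K"
    then have i: "spine_edge i \<in> glued_edges K'" "i < length vs - 1"
      using K unfolding glued_edges_def by auto
    then obtain j where "j \<in> K'" "spine_edge i = spine_edge j"
      using spine_edge_notin_leaf_edges unfolding glued_edges_def by blast
    then show "i \<in> K'" using spine_edge_inj i K by blast
  qed
  then show ?thesis by (intro inj_onI) blast
qed

lemma block_of_spine_index_eq_if_glued:
  assumes K: "K \<subseteq> {..<length vs - 1}" and e: "{x, y} \<in> glued_edges K"
  shows "block_of K (spine_index x) = block_of K (spine_index y)"
proof (cases "{x, y} \<in> leaf_edges")
  case True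
  then obtain u where u: "is_leaf V E u" "{x, y} = {u, leaf_parent u}" by (rule leaf_edgesE)
  have p: "leaf_parent u \<in> set vs" using leaf_parent_in_spine[OF u(1)] .
  have "spine_proj u = spine_proj (leaf_parent u)"
    using spine_proj_leaf[OF u(1)] p unfolding spine_proj_def by auto
  moreover have "u \<in> V" "leaf_parent u \<in> V" using u(1) p spine_subset unfolding is_leaf_def by auto
  ultimately have "spine_index u = spine_index (leaf_parent u)" using spine_index spine_nth_eq_iff by metis
  then show ?thesis using u(2) by (auto simp: doubleton_eq_iff)
next
  case False
  then obtain i where i: "i \<in> K" "{x, y} = spine_edge i" using e unfolding glued_edges_def by blast
  then have "spine_index (vs ! i) = i" "spine_index (vs ! Suc i) = Suc i"
    using K spine_index_nth by auto
  moreover have "block_of K (Suc i) = block_of K i" using i by (simp add: block_of_Suc)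
  ultimately show ?thesis using i(2) unfolding spine_edge_def by (auto simp: doubleton_eq_iff)
qed

lemma glued_spine_path:
  assumes "i \<le> j" "j < length vs" "\<And>t. i \<le> t \<Longrightarrow> t < j \<Longrightarrow> t \<in> K"
  shows "(vs ! i, vs ! j) \<in> (adj (glued_edges K))\<^sup>*"
  using assms
proof (induction j)
  case (Suc j)
  show ?case
  proof (cases "i = Suc j")
    case False
    then have "i \<le> j" using Suc by simp
    then have "(vs ! i, vs ! j) \<in> (adj (glued_edges K))\<^sup>*" "j \<in> K" using Suc by simp_all
    then show ?thesis unfolding adj_def glued_edges_def spine_edge_def
      by (auto intro: rtrancl_into_rtrancl)
  qed simp
qed simp

lemma glued_path_to_spine_proj: "v \<in> V \<Longrightarrow> (v, spine_proj v) \<in> (adj (glued_edges K))\<^sup>*"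
proof (cases "v \<in> set vs")
  case False
  assume v: "v \<in> V"
  then have leaf: "is_leaf V E v" using internal_or_leaf[OF v] set_spine False by auto
  then have "{v, leaf_parent v} \<in> leaf_edges" using leaf_parent(1)[OF leaf] unfolding leaf_edges_def by auto
  then have "(v, leaf_parent v) \<in> adj (glued_edges K)" unfolding adj_def glued_edges_def by auto
  then show ?thesis using spine_proj_leaf[OF leaf] by simp
qed (simp add: spine_proj_def)

lemma glued_connected_if_same_block:
  assumes u: "u \<in> V" and w: "w \<in> V"
    and same: "block_of K (spine_index u) = block_of K (spine_index w)"
  shows "(u, w) \<in> (adj (glued_edges K))\<^sup>*"
proof -
  have path: "(vs ! i, vs ! j) \<in> (adj (glued_edges K))\<^sup>*"
    if "i \<le> j" "j < length vs" "block_of K i = block_of K j" for i j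
    using glued_spine_path[OF that(1,2)] block_of_eq_imp_mem[OF _ _ that(3)] by blast
  have "(vs ! spine_index u, vs ! spine_index w) \<in> (adj (glued_edges K))\<^sup>*"
  proof (cases "spine_index u \<le> spine_index w")
    case True
    then show ?thesis using path spine_index w same by blast
  next
    case False
    then show ?thesis
      using path[of "spine_index w" "spine_index u"] spine_index u same adj_rtrancl_sym by fastforce
  qed
  then have "(spine_proj u, spine_proj w) \<in> (adj (glued_edges K))\<^sup>*" using spine_index u w by simp
  then show ?thesis
    using glued_path_to_spine_proj[OF u] glued_path_to_spine_proj[OF w] adj_rtrancl_sym
    by (meson rtrancl_trans)
qed

lemma comp_partition_glued_edges:
  assumes K: "K \<subseteq> {..<length vs - 1}"
  shows "comp_partition V (glued_edges K) = mset (glue parts K)"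
proof -
  have "(u, w) \<in> (adj (glued_edges K))\<^sup>* \<longleftrightarrow> block_of K (spine_index u) = block_of K (spine_index w)"
    if "u \<in> V" "w \<in> V" for u w
  proof
    assume "(u, w) \<in> (adj (glued_edges K))\<^sup>*"
    then show "block_of K (spine_index u) = block_of K (spine_index w)"
      by (induction rule: rtrancl_induct)
        (use block_of_spine_index_eq_if_glued[OF K] in \<open>auto simp: adj_def\<close>)
  qed (use glued_connected_if_same_block that in blast)
  then have "comp_partition V (glued_edges K)
      = image_mset (block_sum parts K) (mset_set ((\<lambda>v. block_of K (spine_index v)) ` V))"
    by (simp add: comp_partition_by_label card_block_of_spine_index)
  also have "(\<lambda>v. block_of K (spine_index v)) ` V = block_of K ` {..<length parts}"
    by (metis image_image spine_index_image length_parts)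
  finally show ?thesis using mset_glue composition_parts unfolding is_composition_def by simp
qed

lemma one_notin_comp_partition_glued_edges:
  assumes K: "K \<subseteq> {..<length vs - 1}"
  shows "1 \<notin># comp_partition V (glued_edges K)"
proof
  assume "1 \<in># comp_partition V (glued_edges K)"
  then obtain i where i: "i < length vs" "block_sum parts K (block_of K i) = 1"
    using comp_partition_glued_edges[OF K] mset_glue composition_parts length_parts
    unfolding is_composition_def by auto
  have "parts ! i \<le> block_sum parts K (block_of K i)"
    using member_le_sum[of i "{..<length parts}" "\<lambda>j. if block_of K j = block_of K i then parts ! j else 0"]
    using i(1) length_parts unfolding block_sum_def by simp
  then show False using nth_parts_ge_2[OF i(1)] i(2) by simp
qed

lemma one_in_comp_partition_if_leaf_edge_missing:
  assumes A: "A \<subseteq> E" and e: "e \<in> leaf_edges" "e \<notin> A"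
  shows "1 \<in># comp_partition V A"
proof -
  obtain u where u: "is_leaf V E u" "e = {u, leaf_parent u}" using e(1) by (rule leaf_edgesE)
  have uV: "u \<in> V" using u unfolding is_leaf_def by simp
  have "w = u" if "(u, w) \<in> (adj A)\<^sup>*" for w
    using that
  proof (cases rule: converse_rtranclE)
    case (step y)
    then have "{u, y} \<in> A" unfolding adj_def by simp
    then have "y = leaf_parent u" "{u, y} \<in> A" using A leaf_parent(2)[OF u(1)] by auto
    then show ?thesis using e u by simp
  qed simp
  then have "component V A u = {u}" unfolding component_def using uV by auto
  then have "{u} \<in> components V A" unfolding components_def using uV by force
  moreover have "finite (components V A)" unfolding components_def using finite_V by simp
  ultimately show ?thesis unfolding comp_partition_def by force
qed

lemma eq_glued_edges:
  assumes A: "A \<subseteq> E" "leaf_edges \<subseteq> A"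
  shows "A = glued_edges {i. i < length vs - 1 \<and> spine_edge i \<in> A}"
proof (intro equalityI subsetI)
  fix e assume "e \<in> A"
  show "e \<in> glued_edges {i. i < length vs - 1 \<and> spine_edge i \<in> A}"
  proof (cases "e \<in> leaf_edges")
    case False
    have "e \<in> E" using \<open>e \<in> A\<close> A by auto
    then obtain x y where xy: "e = {x, y}" using edge_doubleton by blast
    then have "x \<in> V" "y \<in> V" "\<not> is_leaf V E x" "\<not> is_leaf V E y"
      using False edge_subset[OF \<open>e \<in> E\<close>] \<open>e \<in> E\<close> unfolding leaf_edges_def by auto
    then have "x \<in> set vs" "y \<in> set vs" using internal_or_leaf set_spine by auto
    then obtain i j where ij: "i < length vs" "j < length vs" "x = vs ! i" "y = vs ! j"
      by (auto simp: in_set_conv_nth)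
    then have "i + 1 = j \<or> j + 1 = i" using spine_adj_iff \<open>e \<in> E\<close> xy by blast
    then have "e = spine_edge i \<and> i < length vs - 1 \<or> e = spine_edge j \<and> j < length vs - 1"
      using ij xy unfolding spine_edge_def by auto
    then show ?thesis using \<open>e \<in> A\<close> unfolding glued_edges_def by auto
  qed (simp add: glued_edges_def)
qed (use A in \<open>auto simp: glued_edges_def\<close>)

lemma edge_sets_without_singletons:
  "{A \<in> Pow E. 1 \<notin># comp_partition V A} = glued_edges ` Pow {..<length vs - 1}"
proof (intro equalityI subsetI)
  fix A assume "A \<in> {A \<in> Pow E. 1 \<notin># comp_partition V A}"
  then have "A \<subseteq> E" "leaf_edges \<subseteq> A"
    using one_in_comp_partition_if_leaf_edge_missing by auto
  then show "A \<in> glued_edges ` Pow {..<length vs - 1}"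
    using eq_glued_edges by blast
qed (use glued_edges_subset one_notin_comp_partition_glued_edges in auto)

lemma L_poly_spine_comp: "L_poly parts = filter_mset (\<lambda>m. 1 \<notin># m) (U_poly V E)"
proof -
  have "filter_mset (\<lambda>m. 1 \<notin># m) (U_poly V E) =
      image_mset (comp_partition V) (mset_set {A \<in> Pow E. 1 \<notin># comp_partition V A})"
    unfolding U_poly_def using finite_E by (simp add: filter_mset_image_mset)
  also have "\<dots> = image_mset (comp_partition V) (image_mset glued_edges (mset_set (Pow {..<length vs - 1})))"
    unfolding edge_sets_without_singletons by (subst image_mset_mset_set[OF inj_on_glued_edges]) (rule refl)
  also have "\<dots> = image_mset (\<lambda>K. mset (glue parts K)) (mset_set (Pow {..<length vs - 1}))"
    unfolding multiset.map_comp comp_def by (rule image_mset_cong) (simp add: comp_partition_glued_edges)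
  also have "\<dots> = L_poly parts" using L_poly_eq_glue[OF composition_parts] length_parts by simp
  finally show ?thesis by simp
qed

end

lemma L_poly_Phi:
  assumes "is_proper_caterpillar V E" "\<beta> \<in> Phi V E"
  shows "L_poly \<beta> = filter_mset (\<lambda>m. 1 \<notin># m) (U_poly V E)"
proof -
  obtain vs where vs: "is_spine V E vs" "\<beta> = spine_comp V E vs \<or> \<beta> = rev (spine_comp V E vs)"
    using assms(2) unfolding Phi_def by blast
  interpret proper_caterpillar_spine V E vs using assms(1) vs(1) by unfold_locales
  show ?thesis using vs(2) L_poly_spine_comp L_poly_rev by auto
qed

theorem corollary2p4:
  fixes V :: "'a set" and E :: "'a set set" and V' :: "'b set" and E' :: "'b set set"
  assumes "is_proper_caterpillar V E" and "is_proper_caterpillar V' E'"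
    and "U_poly V E = U_poly V' E'"
    and "\<beta> \<in> Phi V E" and "\<beta>' \<in> Phi V' E'"
  shows "L_poly \<beta> = L_poly \<beta>'"
  using L_poly_Phi[OF assms(1,4)] L_poly_Phi[OF assms(2,5)] assms(3) by simp

end
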